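(* Let $C_{\mathcal L}(\mathbb T^2):=\mathcal L^\infty_{-,-}(\mathbb T^2)\cap C(\mathbb T^2)$ and let $\varphi\in C(\mathbb T^2)$. Then $$\operatorname{dist}_{L^\infty}(\varphi,\mathcal L^\infty_{-,-})=\operatorname{dist}_{L^\infty}(\varphi,C_{\mathcal L}).$$
   Context: $H^2_{-,-}$ consists of $f\in L^2(\mathbb T^2)$ whose Fourier coefficients $\hat f(n_1,n_2)$ vanish unless $n_1<0,n_2<0$, and $\mathbb P_{-,-}$ is the orthogonal projection onto it. $\mathcal L^\infty_{-,-}(\mathbb T^2)$ is the space of $b\in L^\infty(\mathbb T^2)$ with $\mathbb P_{-,-}b=0$. *)

theory Defs
  imports "HOL-Analysis.Analysis" "HOL-Probability.Essential_Supremum"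
begin

text \<open>The torus T^2 is identified with the fundamental square [0,1]^2 (coordinates t, with
  the point (e^{2 pi i t1}, e^{2 pi i t2})), carrying normalized Lebesgue measure.\<close>

definition T2sq :: "(real \<times> real) set" where
  "T2sq = cbox (0,0) (1,1)"

definition T2meas :: "(real \<times> real) measure" where
  "T2meas = lebesgue_on T2sq"

definition Linf_norm :: "(real \<times> real \<Rightarrow> complex) \<Rightarrow> ereal" where
  "Linf_norm f = esssup T2meas (\<lambda>z. ereal (cmod (f z)))"

definition Linf :: "(real \<times> real \<Rightarrow> complex) set" where
  "Linf = {f. f \<in> borel_measurable T2meas \<and> Linf_norm f < \<infinity>}"

definition fourier2 :: "(real \<times> real \<Rightarrow> complex) \<Rightarrow> int \<Rightarrow> int \<Rightarrow> complex" where
  "fourier2 f n1 n2 =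
     integral\<^sup>L T2meas (\<lambda>z. f z * cis (- 2 * pi * (of_int n1 * fst z + of_int n2 * snd z)))"

definition Linf_mm :: "(real \<times> real \<Rightarrow> complex) set" where
  "Linf_mm = {b \<in> Linf. \<forall>n1 n2. n1 < 0 \<longrightarrow> n2 < 0 \<longrightarrow> fourier2 b n1 n2 = 0}"

definition CT2 :: "(real \<times> real \<Rightarrow> complex) set" where
  "CT2 = {f. continuous_on UNIV f \<and> (\<forall>x y. f (x + 1, y) = f (x, y) \<and> f (x, y + 1) = f (x, y))}"

definition C_L :: "(real \<times> real \<Rightarrow> complex) set" where
  "C_L = Linf_mm \<inter> CT2"

definition dist_Linf :: "(real \<times> real \<Rightarrow> complex) \<Rightarrow> (real \<times> real \<Rightarrow> complex) set \<Rightarrow> ereal" where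
  "dist_Linf f S = (INF b\<in>S. Linf_norm (\<lambda>z. f z - b z))"

end

(*
  Only dist(phi, C_L) <= dist(phi, L^infinity_{-,-}) needs proof, as C_L is a subset of
  L^infinity_{-,-}. Given b in L^infinity_{-,-} with |phi - b| <= M a.e., replace b by its Fejer mean
  sigma_N b = b * F_N. This is a trigonometric polynomial whose Fourier coefficients are those of b
  multiplied by weights, so it lies in C_L. Since F_N >= 0 has integral 1, |sigma_N (phi - b)| <= M
  everywhere, and since F_N concentrates near Z^2, sigma_N phi -> phi uniformly. Hence
  |phi - sigma_N b| <= |phi - sigma_N phi| + M <= M + eps for large N.
*)
theory Submission
  imports Defs
begin

section \<open>Characters of the torus\<close>

definition tchar :: "int \<times> int \<Rightarrow> real \<times> real \<Rightarrow> complex" where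
  "tchar m t = cis (2 * pi * (of_int (fst m) * fst t + of_int (snd m) * snd t))"

lemma tchar_zero [simp]: "tchar 0 t = 1"
  by (simp add: tchar_def)

lemma tchar_add: "tchar (m + m') t = tchar m t * tchar m' t"
  by (simp add: tchar_def cis_mult algebra_simps)

lemma tchar_diff: "tchar (m - m') t = tchar m t * cnj (tchar m' t)"
  by (simp add: tchar_def cis_cnj cis_mult algebra_simps)

lemma tchar_diff_arg: "tchar m (x - t) = tchar m x * tchar (- m) t"
  by (simp add: tchar_def cis_mult algebra_simps)

lemma tchar_Pair: "tchar (a, b) t = tchar (a, 0) t * tchar (0, b) t"
  by (simp add: tchar_def cis_mult algebra_simps)

lemma tchar_periodic: "tchar m (x + 1, y) = tchar m (x, y)" "tchar m (x, y + 1) = tchar m (x, y)"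
  by (simp_all add: tchar_def distrib_left cis_mult[symmetric] cis_multiple_2pi)

lemma continuous_on_tchar [continuous_intros]: "continuous_on S (tchar m)"
  unfolding tchar_def by (intro continuous_intros)

lemma fourier2_eq_integral_tchar: "fourier2 f n1 n2 = integral\<^sup>L T2meas (\<lambda>t. f t * tchar (- n1, - n2) t)"
  unfolding fourier2_def tchar_def by (simp add: algebra_simps)

lemma integral_cis_int:
  "integral {0..1} (\<lambda>y. cis (2 * pi * of_int k * y)) = (if k = 0 then 1 else 0)"
proof (cases "k = 0")
  case False
  have "integral {0..1} (\<lambda>y. cis (2 * pi * of_int k * y))
      = integral {0..1} (\<lambda>t. exp ((\<i> * (2 * pi * of_int k)) * complex_of_real t))"
    by (simp add: cis_conv_exp mult.commute mult.left_commute)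
  also have "\<dots> = (exp ((\<i> * (2 * pi * of_int k)) * of_real 1) - 1) / (\<i> * (2 * pi * of_int k))"
    by (rule integral_exp) (use False in auto)
  also have "exp ((\<i> * (2 * pi * of_int k)) * of_real 1) = cis (2 * pi * of_int k)"
    by (simp add: cis_conv_exp mult.commute mult.left_commute)
  finally show ?thesis
    using False by simp
qed simp

lemma T2meas_space [simp]: "space T2meas = T2sq"
  by (simp add: T2meas_def)

lemma finite_measure_T2meas: "finite_measure T2meas"
  unfolding T2meas_def T2sq_def by (rule finite_measure_lebesgue_on) simp

lemma measurable_continuous_T2: "continuous_on T2sq f \<Longrightarrow> f \<in> borel_measurable T2meas"
  unfolding T2meas_def by (rule continuous_imp_measurable_on_sets_lebesgue) (simp_all add: T2sq_def)

lemma integrable_continuous_T2: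
  "continuous_on T2sq (f :: _ \<Rightarrow> 'a::euclidean_space) \<Longrightarrow> integrable T2meas f"
  unfolding T2meas_def T2sq_def by (rule continuous_imp_integrable)

lemma integral_tchar: "integral\<^sup>L T2meas (tchar m) = (if m = 0 then 1 else 0)"
proof -
  have "integral\<^sup>L T2meas (tchar m) = integral (cbox (0, 0) (1, 1)) (tchar m)"
    unfolding T2meas_def T2sq_def
    by (intro lebesgue_integral_eq_integral continuous_imp_integrable continuous_intros) auto
  also have "\<dots> = integral (cbox 0 1) (\<lambda>x. integral (cbox 0 1) (\<lambda>y. tchar m (x, y)))"
    by (rule integral_prod_continuous) (intro continuous_intros)
  also have "\<dots> = integral {0..1} (\<lambda>x. cis (2 * pi * of_int (fst m) * x))
                  * integral {0..1} (\<lambda>y. cis (2 * pi * of_int (snd m) * y))"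
    by (simp add: tchar_def cbox_interval distrib_left cis_mult[symmetric] mult.assoc)
  finally show ?thesis
    by (simp add: integral_cis_int prod_eq_iff)
qed

lemma emeasure_T2meas_neq_0: "emeasure T2meas (space T2meas) \<noteq> 0"
proof -
  have "tchar 0 = (\<lambda>t. 1)"
    by auto
  then have "measure T2meas (space T2meas) = 1"
    using integral_tchar[of 0] by (simp add: scaleR_conv_of_real)
  then show ?thesis
    by (metis measure_def zero_neq_one enn2real_0)
qed

lemma integrable_mult_continuous:
  fixes f g :: "real \<times> real \<Rightarrow> complex"
  assumes f: "integrable T2meas f" and g: "continuous_on T2sq g"
  shows "integrable T2meas (\<lambda>t. f t * g t)"
proof -
  obtain B where B: "\<And>t. t \<in> T2sq \<Longrightarrow> cmod (g t) \<le> B"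
    using compact_imp_bounded[OF compact_continuous_image[OF g]]
    by (auto simp: T2sq_def bounded_iff)
  have bound: "AE t in T2meas. cmod (f t * g t) \<le> cmod (B * f t)"
    using AE_space
  proof eventually_elim
    case (elim t)
    then have "cmod (g t) \<le> \<bar>B\<bar>"
      using B by fastforce
    then show ?case
      by (simp add: norm_mult mult.commute[of "cmod (f t)"] mult_right_mono)
  qed
  have "integrable T2meas (\<lambda>t. B * f t)"
    using f by simp
  moreover have "(\<lambda>t. f t * g t) \<in> borel_measurable T2meas"
    using borel_measurable_integrable[OF f] measurable_continuous_T2[OF g] by measurable
  ultimately show ?thesis
    using bound by (rule Bochner_Integration.integrable_bound)
qed

section \<open>Trigonometric sums and the Fejer kernel\<close>

definition trig_sum :: "(int \<times> int) set \<Rightarrow> real \<times> real \<Rightarrow> complex" where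
  "trig_sum P s = (\<Sum>p\<in>P. tchar p s)"

lemma continuous_on_trig_sum [continuous_intros]:
  "continuous_on S f \<Longrightarrow> continuous_on S (\<lambda>t. trig_sum P (f t))"
  unfolding trig_sum_def tchar_def by (intro continuous_intros)

lemma norm_trig_sum_sq: "complex_of_real ((cmod (trig_sum P s))\<^sup>2) = (\<Sum>p\<in>P. \<Sum>q\<in>P. tchar (p - q) s)"
proof -
  have "complex_of_real ((cmod (trig_sum P s))\<^sup>2) = trig_sum P s * cnj (trig_sum P s)"
    by (metis complex_norm_square of_real_power)
  then show ?thesis
    by (simp add: trig_sum_def sum_product tchar_diff)
qed

lemma integral_norm_trig_sum_sq:
  assumes "finite P"
  shows "integral\<^sup>L T2meas (\<lambda>t. (cmod (trig_sum P (x - t)))\<^sup>2) = card P"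
proof -
  have "complex_of_real (integral\<^sup>L T2meas (\<lambda>t. (cmod (trig_sum P (x - t)))\<^sup>2))
      = integral\<^sup>L T2meas (\<lambda>t. complex_of_real ((cmod (trig_sum P (x - t)))\<^sup>2))"
    by (rule integral_complex_of_real[symmetric])
  also have "\<dots> = integral\<^sup>L T2meas (\<lambda>t. \<Sum>p\<in>P. \<Sum>q\<in>P. tchar (p - q) x * tchar (q - p) t)"
    unfolding norm_trig_sum_sq by (simp add: tchar_diff_arg)
  also have "\<dots> = (\<Sum>p\<in>P. \<Sum>q\<in>P. tchar (p - q) x * integral\<^sup>L T2meas (tchar (q - p)))"
    by (simp add: integrable_continuous_T2[OF continuous_on_tchar])
  also have "\<dots> = (\<Sum>p\<in>P. \<Sum>q\<in>P. if q = p then 1 else 0)"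
    by (intro sum.cong refl) (auto simp: integral_tchar)
  also have "\<dots> = card P"
    using assms by simp
  finally show ?thesis
    by (metis of_real_eq_iff of_real_of_nat_eq)
qed

lemma trig_sum_Times: "trig_sum (A \<times> B) s = trig_sum (A \<times> {0}) s * trig_sum ({0} \<times> B) s"
proof -
  have "trig_sum (A \<times> B) s = (\<Sum>a\<in>A. \<Sum>b\<in>B. tchar (a, 0) s * tchar (0, b) s)"
    unfolding trig_sum_def sum.cartesian_product' by (intro sum.cong refl tchar_Pair)
  then show ?thesis
    by (simp add: trig_sum_def sum.cartesian_product' sum_product)
qed

definition freqs :: "nat \<Rightarrow> int set" where
  "freqs N = int ` {..<N}"

lemma finite_freqs [simp]: "finite (freqs N)"
  by (simp add: freqs_def)

lemma card_freqs [simp]: "card (freqs N) = N"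
  by (simp add: freqs_def card_image)

lemma trig_sum_freqs_fst: "trig_sum (freqs N \<times> {0}) s = (\<Sum>i<N. cis (2 * pi * fst s) ^ i)"
  by (auto simp: trig_sum_def freqs_def sum.cartesian_product' sum.reindex tchar_def Complex.DeMoivre
      mult_ac intro!: sum.cong)

lemma trig_sum_freqs_snd: "trig_sum ({0} \<times> freqs N) s = (\<Sum>i<N. cis (2 * pi * snd s) ^ i)"
  by (auto simp: trig_sum_def freqs_def sum.cartesian_product' sum.reindex tchar_def Complex.DeMoivre
      mult_ac intro!: sum.cong)

text \<open>The product F_N(s1) F_N(s2) of one-dimensional Fejer kernels, since
  F_N(r) = |\<Sum>k<N. e^(2 pi i k r)|^2 / N.\<close>

definition fejer :: "nat \<Rightarrow> real \<times> real \<Rightarrow> real" where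
  "fejer N s = (cmod (trig_sum (freqs N \<times> freqs N) s))\<^sup>2 / (real N)\<^sup>2"

lemma fejer_nonneg: "0 \<le> fejer N s"
  by (simp add: fejer_def)

lemma continuous_on_fejer [continuous_intros]:
  "continuous_on S f \<Longrightarrow> continuous_on S (\<lambda>t. fejer N (f t))"
  unfolding fejer_def divide_inverse by (intro continuous_intros)

lemma integral_fejer:
  assumes "0 < N"
  shows "integral\<^sup>L T2meas (\<lambda>t. fejer N (x - t)) = 1"
proof -
  have "integral\<^sup>L T2meas (\<lambda>t. fejer N (x - t))
      = integral\<^sup>L T2meas (\<lambda>t. (cmod (trig_sum (freqs N \<times> freqs N) (x - t)))\<^sup>2) / (real N)\<^sup>2"
    unfolding fejer_def by simp
  also have "\<dots> = real (N * N) / (real N)\<^sup>2"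
    by (simp add: integral_norm_trig_sum_sq card_cartesian_product)
  finally show ?thesis
    using assms by (simp add: power2_eq_square)
qed

lemma fejer_expansion:
  "complex_of_real (fejer N s)
     = (\<Sum>p\<in>freqs N \<times> freqs N. \<Sum>q\<in>freqs N \<times> freqs N. tchar (p - q) s) / (of_nat N)\<^sup>2"
  by (simp add: fejer_def flip: norm_trig_sum_sq)

definition fejer_mean :: "nat \<Rightarrow> (real \<times> real \<Rightarrow> complex) \<Rightarrow> real \<times> real \<Rightarrow> complex" where
  "fejer_mean N f x = integral\<^sup>L T2meas (\<lambda>t. f t * fejer N (x - t))"

lemma integrable_mult_fejer:
  fixes f :: "real \<times> real \<Rightarrow> complex"
  assumes "integrable T2meas f"
  shows "integrable T2meas (\<lambda>t. f t * fejer N (x - t))"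
  using assms by (intro integrable_mult_continuous continuous_intros)

lemma fejer_mean_diff:
  fixes f g :: "real \<times> real \<Rightarrow> complex"
  assumes "integrable T2meas f" "integrable T2meas g"
  shows "fejer_mean N (\<lambda>t. f t - g t) x = fejer_mean N f x - fejer_mean N g x"
  unfolding fejer_mean_def using assms by (simp add: left_diff_distrib integrable_mult_fejer)

lemma diff_fejer_mean:
  fixes f :: "real \<times> real \<Rightarrow> complex"
  assumes "integrable T2meas f" "0 < N"
  shows "f x - fejer_mean N f x = integral\<^sup>L T2meas (\<lambda>t. (f x - f t) * fejer N (x - t))"
proof -
  have "f x = integral\<^sup>L T2meas (\<lambda>t. f x * fejer N (x - t))"
    by (simp add: integral_complex_of_real integral_fejer[OF \<open>0 < N\<close>])
  moreover have "integrable T2meas (\<lambda>t. f x * fejer N (x - t))"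
    by (intro integrable_mult_fejer integrable_continuous_T2 continuous_on_const)
  ultimately show ?thesis
    unfolding fejer_mean_def left_diff_distrib using integrable_mult_fejer[OF assms(1)] by simp
qed

lemma fejer_mean_expansion:
  fixes f :: "real \<times> real \<Rightarrow> complex"
  assumes "integrable T2meas f"
  shows "fejer_mean N f x = (\<Sum>p\<in>freqs N \<times> freqs N. \<Sum>q\<in>freqs N \<times> freqs N.
           tchar (p - q) x * integral\<^sup>L T2meas (\<lambda>t. f t * tchar (q - p) t)) / (of_nat N)\<^sup>2"
proof -
  have "fejer_mean N f x = integral\<^sup>L T2meas (\<lambda>t. (\<Sum>p\<in>freqs N \<times> freqs N. \<Sum>q\<in>freqs N \<times> freqs N.
           tchar (p - q) x * (f t * tchar (q - p) t)) / (of_nat N)\<^sup>2)"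
    unfolding fejer_mean_def fejer_expansion
    by (simp add: tchar_diff_arg sum_distrib_left sum_divide_distrib mult_ac)
  then show ?thesis
    using assms by (simp add: integrable_mult_continuous continuous_on_tchar)
qed

lemma fejer_mean_CT2:
  fixes f :: "real \<times> real \<Rightarrow> complex"
  assumes "integrable T2meas f"
  shows "fejer_mean N f \<in> CT2"
  unfolding CT2_def fejer_mean_expansion[OF assms]
  by (auto simp: tchar_periodic divide_inverse intro!: continuous_intros)

lemma fourier2_fejer_mean_eq_0:
  fixes f :: "real \<times> real \<Rightarrow> complex"
  assumes f: "integrable T2meas f" and zero: "fourier2 f n1 n2 = 0"
  shows "fourier2 (fejer_mean N f) n1 n2 = 0"
proof -
  define a where "a p q = integral\<^sup>L T2meas (\<lambda>t. f t * tchar (q - p) t)" for p q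
  have terms_0: "a p q * integral\<^sup>L T2meas (tchar (p - q + (- n1, - n2))) = 0" for p q
  proof (cases "p - q + (- n1, - n2) = 0")
    case True
    then have "q - p = (- n1, - n2)"
      by (simp add: prod_eq_iff algebra_simps)
    then have "a p q = fourier2 f n1 n2"
      by (simp add: a_def fourier2_eq_integral_tchar)
    then show ?thesis
      using zero by simp
  qed (simp add: integral_tchar)
  have "fourier2 (fejer_mean N f) n1 n2 = integral\<^sup>L T2meas (\<lambda>t.
      (\<Sum>p\<in>freqs N \<times> freqs N. \<Sum>q\<in>freqs N \<times> freqs N. a p q * tchar (p - q + (- n1, - n2)) t)
        / (of_nat N)\<^sup>2)"
    unfolding fourier2_eq_integral_tchar fejer_mean_expansion[OF f] a_def
    by (intro Bochner_Integration.integral_cong refl)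
      (simp add: tchar_add sum_distrib_left sum_divide_distrib mult_ac)
  also have "\<dots> = (\<Sum>p\<in>freqs N \<times> freqs N. \<Sum>q\<in>freqs N \<times> freqs N.
      a p q * integral\<^sup>L T2meas (tchar (p - q + (- n1, - n2)))) / (of_nat N)\<^sup>2"
    by (simp add: integrable_continuous_T2[OF continuous_on_tchar])
  also have "\<dots> = 0"
    by (simp add: terms_0)
  finally show ?thesis .
qed

lemma norm_fejer_mean_le:
  fixes f :: "real \<times> real \<Rightarrow> complex"
  assumes f: "integrable T2meas f" and bound: "AE t in T2meas. cmod (f t) \<le> M" and "0 < N"
  shows "cmod (fejer_mean N f x) \<le> M"
proof -
  have "cmod (fejer_mean N f x) \<le> integral\<^sup>L T2meas (\<lambda>t. cmod (f t) * fejer N (x - t))"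
    unfolding fejer_mean_def
    using integral_norm_bound[of T2meas "\<lambda>t. f t * fejer N (x - t)"]
    by (simp add: norm_mult fejer_nonneg)
  also have "\<dots> \<le> integral\<^sup>L T2meas (\<lambda>t. M * fejer N (x - t))"
  proof (rule integral_mono_AE)
    show "integrable T2meas (\<lambda>t. cmod (f t) * fejer N (x - t))"
      using integrable_norm[OF integrable_mult_fejer[OF f]] by (simp add: norm_mult fejer_nonneg)
    show "integrable T2meas (\<lambda>t. M * fejer N (x - t))"
      by (intro integrable_continuous_T2 continuous_intros)
    show "AE t in T2meas. cmod (f t) * fejer N (x - t) \<le> M * fejer N (x - t)"
      using bound by eventually_elim (simp add: mult_right_mono fejer_nonneg)
  qed
  also have "\<dots> = M"
    using integral_fejer[OF \<open>0 < N\<close>] by simp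
  finally show ?thesis .
qed

section \<open>Periodic continuous functions\<close>

lemma periodic_shift_int:
  fixes f :: "real \<Rightarrow> 'a"
  assumes "\<And>x. f (x + 1) = f x"
  shows "f (x + of_int k) = f x"
proof (induction k arbitrary: x rule: int_induct[where k = 0])
  case (step1 i)
  then show ?case
    using assms[of "x + of_int i"] by (simp add: add.assoc)
next
  case (step2 i)
  then show ?case
    using assms[of "x - 1"] step2.IH[of "x - 1"] by (simp add: algebra_simps)
qed simp

lemma CT2_shift: "\<phi> \<in> CT2 \<Longrightarrow> \<phi> (x + of_int k1, y + of_int k2) = \<phi> (x, y)"
  using periodic_shift_int[of "\<lambda>x. \<phi> (x, y + of_int k2)"] periodic_shift_int[of "\<lambda>y. \<phi> (x, y)"]
  by (simp add: CT2_def)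

lemma CT2_measurable: "c \<in> CT2 \<Longrightarrow> c \<in> borel_measurable T2meas"
  by (rule measurable_continuous_T2) (auto simp: CT2_def intro: continuous_on_subset)

lemma CT2_integrable: "c \<in> CT2 \<Longrightarrow> integrable T2meas c"
  by (rule integrable_continuous_T2) (auto simp: CT2_def intro: continuous_on_subset)

lemma CT2_uniformly_continuous:
  assumes "\<phi> \<in> CT2"
  shows "uniformly_continuous_on UNIV \<phi>"
  unfolding uniformly_continuous_on_def
proof (intro allI impI)
  fix e :: real
  assume "0 < e"
  have "uniformly_continuous_on (cbox (-1, -1) (2, 2)) \<phi>"
    using assms by (intro compact_uniformly_continuous) (auto simp: CT2_def intro: continuous_on_subset)
  then obtain d where "0 < d" and d: "\<And>u v. u \<in> cbox (-1, -1) (2, 2) \<Longrightarrow> v \<in> cbox (-1, -1) (2, 2) \<Longrightarrow>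
      dist v u < d \<Longrightarrow> dist (\<phi> v) (\<phi> u) < e"
    using \<open>0 < e\<close> unfolding uniformly_continuous_on_def by metis
  show "\<exists>d>0. \<forall>u\<in>UNIV. \<forall>v\<in>UNIV. dist v u < d \<longrightarrow> dist (\<phi> v) (\<phi> u) < e"
  proof (intro exI[of _ "min d 1"] conjI ballI impI)
    fix u v :: "real \<times> real"
    assume uv: "dist v u < min d 1"
    define u' where "u' = (fst u - of_int \<lfloor>fst u\<rfloor>, snd u - of_int \<lfloor>snd u\<rfloor>)"
    define v' where "v' = (fst v - of_int \<lfloor>fst u\<rfloor>, snd v - of_int \<lfloor>snd u\<rfloor>)"
    have "dist (fst v) (fst u) < 1" "dist (snd v) (snd u) < 1"
      using uv dist_fst_le[of v u] dist_snd_le[of v u] by auto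
    then have "u' \<in> cbox (-1, -1) (2, 2)" "v' \<in> cbox (-1, -1) (2, 2)"
      unfolding u'_def v'_def cbox_Pair_eq dist_real_def
      using of_int_floor_le[of "fst u"] real_of_int_floor_add_one_gt[of "fst u"]
        of_int_floor_le[of "snd u"] real_of_int_floor_add_one_gt[of "snd u"]
      by (auto simp del: of_int_floor_le real_of_int_floor_add_one_gt)
    moreover have "dist v' u' = dist v u"
      by (cases u, cases v) (simp add: u'_def v'_def dist_Pair_Pair dist_real_def)
    moreover have "\<phi> u' = \<phi> u" "\<phi> v' = \<phi> v"
      using CT2_shift[OF assms, of _ "- \<lfloor>fst u\<rfloor>" _ "- \<lfloor>snd u\<rfloor>"] by (simp_all add: u'_def v'_def)
    ultimately show "dist (\<phi> v) (\<phi> u) < e"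
      using d uv by fastforce
  qed (use \<open>0 < d\<close> in simp)
qed

section \<open>Uniform convergence of Fejer means\<close>

lemma norm_sum_power_le:
  fixes z :: complex
  assumes "cmod z = 1" "z \<noteq> 1"
  shows "cmod (\<Sum>i<N. z ^ i) \<le> 2 / cmod (z - 1)"
proof -
  have "cmod (\<Sum>i<N. z ^ i) = cmod (1 - z ^ N) / cmod (z - 1)"
    using assms by (simp add: sum_gp_strict norm_divide norm_minus_commute)
  also have "cmod (1 - z ^ N) \<le> 2"
    using norm_triangle_ineq4[of 1 "z ^ N"] assms by (simp add: norm_power)
  then have "cmod (1 - z ^ N) / cmod (z - 1) \<le> 2 / cmod (z - 1)"
    by (simp add: divide_right_mono)
  finally show ?thesis .
qed

lemma cis_away_from_1:
  assumes "0 < d" "d \<le> 1/2"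
  obtains \<eta> where "0 < \<eta>" "\<And>r. \<forall>k::int. d \<le> \<bar>r - of_int k\<bar> \<Longrightarrow> \<eta> \<le> cmod (cis (2 * pi * r) - 1)"
proof -
  have "\<exists>r0\<in>{d..1 - d}. \<forall>r\<in>{d..1 - d}. cmod (cis (2 * pi * r0) - 1) \<le> cmod (cis (2 * pi * r) - 1)"
    by (rule continuous_attains_inf) (use assms in \<open>auto intro!: continuous_intros\<close>)
  then obtain r0 where r0: "r0 \<in> {d..1 - d}"
    and min: "\<And>r. r \<in> {d..1 - d} \<Longrightarrow> cmod (cis (2 * pi * r0) - 1) \<le> cmod (cis (2 * pi * r) - 1)"
    by blast
  have "cis (2 * pi * r0) \<noteq> 1"
  proof
    assume "cis (2 * pi * r0) = 1"
    then have "cos (2 * pi * r0) = 1"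
      using cis.sel(1)[of "2 * pi * r0"] by simp
    then obtain n :: int where "r0 = of_int n"
      by (auto simp: cos_one_2pi_int)
    moreover have "0 < r0" "r0 < 1"
      using r0 assms by auto
    ultimately show False
      by simp
  qed
  then show ?thesis
  proof (intro that[of "cmod (cis (2 * pi * r0) - 1)"])
    fix r :: real
    assume "\<forall>k::int. d \<le> \<bar>r - of_int k\<bar>"
    then have "d \<le> \<bar>r - of_int \<lfloor>r\<rfloor>\<bar>" "d \<le> \<bar>r - of_int (\<lfloor>r\<rfloor> + 1)\<bar>"
      by blast+
    then have "frac r \<in> {d..1 - d}"
      using frac_ge_0[of r] frac_lt_1[of r] by (auto simp: frac_def)
    moreover have "cis (2 * pi * r) = cis (2 * pi * frac r)"
    proof -
      have "cis (2 * pi * r) = cis (2 * pi * frac r + 2 * pi * of_int \<lfloor>r\<rfloor>)"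
        by (simp add: frac_def algebra_simps)
      then show ?thesis
        by (simp add: cis_mult[symmetric])
    qed
    ultimately show "cmod (cis (2 * pi * r0) - 1) \<le> cmod (cis (2 * pi * r) - 1)"
      using min by metis
  qed simp
qed

lemma dirichlet_bounded_away_from_int:
  assumes "0 < d" "d \<le> 1/2"
  obtains K where "0 \<le> K"
    "\<And>N r. \<forall>k::int. d \<le> \<bar>r - of_int k\<bar> \<Longrightarrow> (cmod (\<Sum>i<N. cis (2 * pi * r) ^ i))\<^sup>2 \<le> K"
proof -
  obtain \<eta> where "0 < \<eta>" and \<eta>: "\<And>r. \<forall>k::int. d \<le> \<bar>r - of_int k\<bar> \<Longrightarrow> \<eta> \<le> cmod (cis (2 * pi * r) - 1)"
    using cis_away_from_1[OF assms] by blast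
  show ?thesis
  proof (rule that[of "(2 / \<eta>)\<^sup>2"])
    fix N r
    assume far: "\<forall>k::int. d \<le> \<bar>r - of_int k\<bar>"
    then have "cis (2 * pi * r) \<noteq> 1"
      using \<eta>[OF far] \<open>0 < \<eta>\<close> by auto
    then have "cmod (\<Sum>i<N. cis (2 * pi * r) ^ i) \<le> 2 / cmod (cis (2 * pi * r) - 1)"
      by (intro norm_sum_power_le) auto
    also have "\<dots> \<le> 2 / \<eta>"
      using \<eta>[OF far] \<open>0 < \<eta>\<close> by (intro divide_left_mono) (auto intro!: mult_pos_pos)
    finally show "(cmod (\<Sum>i<N. cis (2 * pi * r) ^ i))\<^sup>2 \<le> (2 / \<eta>)\<^sup>2"
      by (intro power_mono) auto
  qed simp
qed

lemma product_weight_bound: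
  fixes \<delta> D e K g1 g2 :: real
  assumes "0 \<le> g1" "0 \<le> g2" "0 \<le> e" "0 \<le> \<delta>" "\<delta> \<le> D" "0 \<le> K"
    and "g1 \<le> K \<or> g2 \<le> K \<or> \<delta> \<le> e"
  shows "\<delta> * (g1 * g2) \<le> e * (g1 * g2) + D * K * (g1 + g2)"
proof -
  have "0 \<le> e * (g1 * g2)" "0 \<le> D * K * g1" "0 \<le> D * K * g2" "\<delta> * (g1 * g2) \<le> D * (g1 * g2)"
    using assms by (simp_all add: mult_right_mono)
  moreover have "D * (g1 * g2) \<le> D * K * g2" if "g1 \<le> K"
    using that assms by (simp add: mult_left_mono mult_right_mono mult.assoc)
  moreover have "D * (g1 * g2) \<le> D * K * g1" if "g2 \<le> K"
  proof -
    have "D * (g1 * g2) \<le> D * (g1 * K)"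
      using that assms by (intro mult_left_mono) auto
    then show ?thesis
      by (simp add: mult_ac)
  qed
  moreover have "\<delta> * (g1 * g2) \<le> e * (g1 * g2)" if "\<delta> \<le> e"
    using that assms by (simp add: mult_right_mono)
  ultimately show ?thesis
    using assms(7) by (auto simp: distrib_left)
qed

lemma CT2_close_mod_lattice:
  assumes \<phi>: "\<phi> \<in> CT2" and "0 < e"
  obtains d where "0 < d" "\<And>x t k1 k2. \<bar>fst x - fst t - of_int k1\<bar> < d \<Longrightarrow> \<bar>snd x - snd t - of_int k2\<bar> < d \<Longrightarrow>
    cmod (\<phi> x - \<phi> t) < e"
proof -
  have "\<exists>d>0. \<forall>u v. dist v u < d \<longrightarrow> dist (\<phi> v) (\<phi> u) < e"
    using CT2_uniformly_continuous[OF \<phi>] \<open>0 < e\<close> unfolding uniformly_continuous_on_def by simp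
  then obtain d where "0 < d" and d: "\<And>u v. dist v u < d \<Longrightarrow> dist (\<phi> v) (\<phi> u) < e"
    by blast
  show ?thesis
  proof (rule that[of "d / 2"])
    fix x t :: "real \<times> real" and k1 k2 :: int
    assume k1: "\<bar>fst x - fst t - of_int k1\<bar> < d / 2" and k2: "\<bar>snd x - snd t - of_int k2\<bar> < d / 2"
    define t' where "t' = (fst t + of_int k1, snd t + of_int k2)"
    have "dist t' x \<le> \<bar>fst x - fst t - of_int k1\<bar> + \<bar>snd x - snd t - of_int k2\<bar>"
      using sqrt_sum_squares_le_sum_abs[of "fst x - fst t - of_int k1" "snd x - snd t - of_int k2"]
      by (cases x) (simp add: t'_def dist_Pair_Pair dist_real_def abs_minus_commute algebra_simps)
    also have "\<dots> < d"
      using k1 k2 by simp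
    finally have "cmod (\<phi> x - \<phi> t') < e"
      using d[of t' x] by (simp add: dist_norm norm_minus_commute)
    moreover have "\<phi> t' = \<phi> t"
      using CT2_shift[OF \<phi>] by (simp add: t'_def)
    ultimately show "cmod (\<phi> x - \<phi> t) < e"
      by simp
  qed (use \<open>0 < d\<close> in simp)
qed

text \<open>Where x - t is far from Z in one coordinate, the corresponding Dirichlet factor of the kernel
  is bounded; where it is close to Z in both, phi x is close to phi t.\<close>

lemma CT2_kernel_estimate:
  assumes \<phi>: "\<phi> \<in> CT2" and "0 < e"
  obtains C where "\<And>N x t. x \<in> T2sq \<Longrightarrow> t \<in> T2sq \<Longrightarrow>
    cmod (\<phi> x - \<phi> t) * (cmod (trig_sum (freqs N \<times> freqs N) (x - t)))\<^sup>2
      \<le> e * (cmod (trig_sum (freqs N \<times> freqs N) (x - t)))\<^sup>2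
        + C * ((cmod (trig_sum (freqs N \<times> {0}) (x - t)))\<^sup>2 + (cmod (trig_sum ({0} \<times> freqs N) (x - t)))\<^sup>2)"
proof -
  have "bounded (\<phi> ` T2sq)"
    using \<phi> by (intro compact_imp_bounded compact_continuous_image)
      (auto simp: T2sq_def CT2_def intro: continuous_on_subset)
  then obtain B where B: "\<And>u. u \<in> T2sq \<Longrightarrow> cmod (\<phi> u) \<le> B"
    by (auto simp: bounded_iff)
  obtain d where "0 < d" and d: "\<And>x t k1 k2. \<bar>fst x - fst t - of_int k1\<bar> < d \<Longrightarrow>
      \<bar>snd x - snd t - of_int k2\<bar> < d \<Longrightarrow> cmod (\<phi> x - \<phi> t) < e"
    using CT2_close_mod_lattice[OF \<phi> \<open>0 < e\<close>] by blast
  have "0 < min (1/2) d" "min (1/2) d \<le> 1/2"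
    using \<open>0 < d\<close> by auto
  then obtain K where "0 \<le> K"
    and K: "\<And>N r. \<forall>k::int. min (1/2) d \<le> \<bar>r - of_int k\<bar> \<Longrightarrow> (cmod (\<Sum>i<N. cis (2 * pi * r) ^ i))\<^sup>2 \<le> K"
    using dirichlet_bounded_away_from_int by blast
  show ?thesis
  proof (rule that[of "2 * B * K"])
    fix N x t
    assume x: "x \<in> T2sq" and t: "t \<in> T2sq"
    let ?g1 = "(cmod (trig_sum (freqs N \<times> {0}) (x - t)))\<^sup>2"
    let ?g2 = "(cmod (trig_sum ({0} \<times> freqs N) (x - t)))\<^sup>2"
    have "cmod (\<phi> x - \<phi> t) \<le> e" if "\<not> ?g1 \<le> K" "\<not> ?g2 \<le> K"
    proof -
      have "\<not> (\<forall>k::int. min (1/2) d \<le> \<bar>fst (x - t) - of_int k\<bar>)"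
        "\<not> (\<forall>k::int. min (1/2) d \<le> \<bar>snd (x - t) - of_int k\<bar>)"
        using that K[of "fst (x - t)" N] K[of "snd (x - t)" N]
        by (auto simp: trig_sum_freqs_fst trig_sum_freqs_snd simp del: fst_diff snd_diff)
      then obtain k1 k2 :: int
        where "\<bar>fst x - fst t - of_int k1\<bar> < d" "\<bar>snd x - snd t - of_int k2\<bar> < d"
        by (auto simp: not_le)
      then show ?thesis
        using d by (simp add: less_imp_le)
    qed
    then have "?g1 \<le> K \<or> ?g2 \<le> K \<or> cmod (\<phi> x - \<phi> t) \<le> e"
      by blast
    moreover have "cmod (\<phi> x - \<phi> t) \<le> 2 * B"
      using norm_triangle_ineq4[of "\<phi> x" "\<phi> t"] B[OF x] B[OF t] by simp
    ultimately have "cmod (\<phi> x - \<phi> t) * (?g1 * ?g2) \<le> e * (?g1 * ?g2) + 2 * B * K * (?g1 + ?g2)"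
      using \<open>0 \<le> K\<close> \<open>0 < e\<close> by (intro product_weight_bound) auto
    moreover have "(cmod (trig_sum (freqs N \<times> freqs N) (x - t)))\<^sup>2 = ?g1 * ?g2"
      unfolding trig_sum_Times[of "freqs N" "freqs N"] by (simp add: norm_mult power_mult_distrib)
    ultimately show "cmod (\<phi> x - \<phi> t) * (cmod (trig_sum (freqs N \<times> freqs N) (x - t)))\<^sup>2
        \<le> e * (cmod (trig_sum (freqs N \<times> freqs N) (x - t)))\<^sup>2 + 2 * B * K * (?g1 + ?g2)"
      by simp
  qed
qed

lemma CT2_fejer_oscillation_le:
  assumes \<phi>: "\<phi> \<in> CT2" and "0 < e"
  obtains C where "\<And>N x. 0 < N \<Longrightarrow> x \<in> T2sq \<Longrightarrow>
    integral\<^sup>L T2meas (\<lambda>t. cmod (\<phi> x - \<phi> t) * fejer N (x - t)) \<le> e + 2 * C / real N"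
proof -
  obtain C where C: "\<And>N x t. x \<in> T2sq \<Longrightarrow> t \<in> T2sq \<Longrightarrow>
    cmod (\<phi> x - \<phi> t) * (cmod (trig_sum (freqs N \<times> freqs N) (x - t)))\<^sup>2
      \<le> e * (cmod (trig_sum (freqs N \<times> freqs N) (x - t)))\<^sup>2
        + C * ((cmod (trig_sum (freqs N \<times> {0}) (x - t)))\<^sup>2 + (cmod (trig_sum ({0} \<times> freqs N) (x - t)))\<^sup>2)"
    using CT2_kernel_estimate[OF \<phi> \<open>0 < e\<close>] by blast
  have \<phi>_cont: "continuous_on UNIV \<phi>"
    using \<phi> by (simp add: CT2_def)
  show ?thesis
  proof (rule that)
    fix N :: nat and x
    assume "0 < N" and x: "x \<in> T2sq"
    let ?S = "\<lambda>t. (cmod (trig_sum (freqs N \<times> freqs N) (x - t)))\<^sup>2"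
    let ?g1 = "\<lambda>t. (cmod (trig_sum (freqs N \<times> {0}) (x - t)))\<^sup>2"
    let ?g2 = "\<lambda>t. (cmod (trig_sum ({0} \<times> freqs N) (x - t)))\<^sup>2"
    have "integrable T2meas ?S" "integrable T2meas ?g1" "integrable T2meas ?g2"
      by (intro integrable_continuous_T2 continuous_intros)+
    have "integral\<^sup>L T2meas (\<lambda>t. cmod (\<phi> x - \<phi> t) * fejer N (x - t))
        \<le> integral\<^sup>L T2meas (\<lambda>t. (e * ?S t + C * (?g1 t + ?g2 t)) / (real N)\<^sup>2)"
    proof (rule integral_mono)
      show "integrable T2meas (\<lambda>t. cmod (\<phi> x - \<phi> t) * fejer N (x - t))"
        by (intro integrable_continuous_T2 continuous_intros continuous_on_subset[OF \<phi>_cont]) auto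
      show "integrable T2meas (\<lambda>t. (e * ?S t + C * (?g1 t + ?g2 t)) / (real N)\<^sup>2)"
        by (intro integrable_continuous_T2 continuous_intros) (use \<open>0 < N\<close> in simp)
      show "cmod (\<phi> x - \<phi> t) * fejer N (x - t) \<le> (e * ?S t + C * (?g1 t + ?g2 t)) / (real N)\<^sup>2"
        if "t \<in> space T2meas" for t
        using C[of x t N] x that by (simp add: fejer_def divide_right_mono)
    qed
    also have "\<dots> = (e * integral\<^sup>L T2meas ?S + C * (integral\<^sup>L T2meas ?g1 + integral\<^sup>L T2meas ?g2))
        / (real N)\<^sup>2"
      using \<open>integrable T2meas ?S\<close> \<open>integrable T2meas ?g1\<close> \<open>integrable T2meas ?g2\<close> by simp
    also have "\<dots> = (e * (real N * real N) + C * (real N + real N)) / (real N)\<^sup>2"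
      by (simp add: integral_norm_trig_sum_sq card_cartesian_product)
    also have "\<dots> = e + 2 * C / real N"
      using \<open>0 < N\<close> by (simp add: field_simps power2_eq_square)
    finally show "integral\<^sup>L T2meas (\<lambda>t. cmod (\<phi> x - \<phi> t) * fejer N (x - t)) \<le> e + 2 * C / real N" .
  qed
qed

lemma fejer_mean_uniform_approx:
  assumes \<phi>: "\<phi> \<in> CT2" and "0 < \<epsilon>"
  obtains N where "0 < N" "\<And>x. x \<in> T2sq \<Longrightarrow> cmod (\<phi> x - fejer_mean N \<phi> x) \<le> \<epsilon>"
proof -
  obtain C where C: "\<And>N x. 0 < N \<Longrightarrow> x \<in> T2sq \<Longrightarrow>
      integral\<^sup>L T2meas (\<lambda>t. cmod (\<phi> x - \<phi> t) * fejer N (x - t)) \<le> \<epsilon> / 2 + 2 * C / real N"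
    using CT2_fejer_oscillation_le[OF \<phi>, of "\<epsilon> / 2"] \<open>0 < \<epsilon>\<close> by auto
  obtain n :: nat where "4 * C / \<epsilon> < real n"
    using reals_Archimedean2 by blast
  define N where "N = Suc n"
  have "0 < N"
    by (simp add: N_def)
  have "4 * C < \<epsilon> * real N"
    using \<open>4 * C / \<epsilon> < real n\<close> \<open>0 < \<epsilon>\<close> by (simp add: N_def field_simps)
  then have small: "2 * C / real N \<le> \<epsilon> / 2"
    using \<open>0 < N\<close> \<open>0 < \<epsilon>\<close> by (simp add: field_simps)
  show ?thesis
  proof (rule that[OF \<open>0 < N\<close>])
    fix x
    assume x: "x \<in> T2sq"
    have "cmod (\<phi> x - fejer_mean N \<phi> x) \<le> integral\<^sup>L T2meas (\<lambda>t. cmod (\<phi> x - \<phi> t) * fejer N (x - t))"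
      unfolding diff_fejer_mean[OF CT2_integrable[OF \<phi>] \<open>0 < N\<close>]
      using integral_norm_bound[of T2meas "\<lambda>t. (\<phi> x - \<phi> t) * fejer N (x - t)"]
      by (simp add: norm_mult fejer_nonneg)
    then show "cmod (\<phi> x - fejer_mean N \<phi> x) \<le> \<epsilon>"
      using C[OF \<open>0 < N\<close> x] small by simp
  qed
qed

section \<open>Approximation in L^infinity\<close>

lemma Linf_norm_nonneg: "0 \<le> Linf_norm f"
proof -
  have "esssup T2meas (\<lambda>z. 0) \<le> Linf_norm f"
    unfolding Linf_norm_def by (rule esssup_mono) auto
  then show ?thesis
    by (simp add: esssup_const[OF emeasure_T2meas_neq_0])
qed

lemma Linf_norm_le:
  "f \<in> borel_measurable T2meas \<Longrightarrow> (\<And>x. x \<in> T2sq \<Longrightarrow> cmod (f x) \<le> M) \<Longrightarrow> Linf_norm f \<le> ereal M"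
  unfolding Linf_norm_def by (rule esssup_I) auto

lemma Linf_AE_bounded:
  assumes "b \<in> Linf"
  obtains B where "AE t in T2meas. cmod (b t) \<le> B"
proof -
  have ae: "AE t in T2meas. ereal (cmod (b t)) \<le> Linf_norm b"
    unfolding Linf_norm_def by (rule esssup_AE)
  obtain B where "Linf_norm b = ereal B"
    using assms Linf_norm_nonneg[of b] by (cases "Linf_norm b") (auto simp: Linf_def)
  then show ?thesis
    using ae by (intro that[of B]) auto
qed

lemma Linf_integrable:
  assumes "b \<in> Linf"
  shows "integrable T2meas b"
proof -
  obtain B where "AE t in T2meas. cmod (b t) \<le> B"
    using Linf_AE_bounded[OF assms] .
  then show ?thesis
    using finite_measure.integrable_const_bound[OF finite_measure_T2meas] assms by (auto simp: Linf_def)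
qed

lemma fejer_mean_in_C_L:
  assumes b: "b \<in> Linf_mm" and "0 < N"
  shows "fejer_mean N b \<in> C_L"
proof -
  have "b \<in> Linf"
    using b by (simp add: Linf_mm_def)
  then obtain B where B: "AE t in T2meas. cmod (b t) \<le> B"
    by (rule Linf_AE_bounded)
  have int_b: "integrable T2meas b"
    by (rule Linf_integrable[OF \<open>b \<in> Linf\<close>])
  have "fejer_mean N b \<in> CT2"
    by (rule fejer_mean_CT2[OF int_b])
  moreover have "Linf_norm (fejer_mean N b) \<le> ereal B"
    by (intro Linf_norm_le CT2_measurable[OF \<open>fejer_mean N b \<in> CT2\<close>]
        norm_fejer_mean_le[OF int_b B \<open>0 < N\<close>])
  moreover have "fourier2 (fejer_mean N b) n1 n2 = 0" if "n1 < 0" "n2 < 0" for n1 n2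
    using b that by (intro fourier2_fejer_mean_eq_0[OF int_b]) (simp add: Linf_mm_def)
  ultimately show ?thesis
    using CT2_measurable by (auto simp: C_L_def Linf_mm_def Linf_def)
qed

lemma C_L_approx:
  assumes \<phi>: "\<phi> \<in> CT2" and b: "b \<in> Linf_mm"
    and M: "AE t in T2meas. cmod (\<phi> t - b t) \<le> M" and "0 < \<epsilon>"
  obtains c where "c \<in> C_L" "\<And>x. x \<in> T2sq \<Longrightarrow> cmod (\<phi> x - c x) \<le> M + \<epsilon>"
proof -
  obtain N where "0 < N" and N: "\<And>x. x \<in> T2sq \<Longrightarrow> cmod (\<phi> x - fejer_mean N \<phi> x) \<le> \<epsilon>"
    using fejer_mean_uniform_approx[OF \<phi> \<open>0 < \<epsilon>\<close>] by blast
  have int_\<phi>: "integrable T2meas \<phi>" and int_b: "integrable T2meas b"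
    using CT2_integrable[OF \<phi>] Linf_integrable b by (auto simp: Linf_mm_def)
  show ?thesis
  proof (rule that[OF fejer_mean_in_C_L[OF b \<open>0 < N\<close>]])
    fix x
    assume x: "x \<in> T2sq"
    have "\<phi> x - fejer_mean N b x = (\<phi> x - fejer_mean N \<phi> x) + fejer_mean N (\<lambda>t. \<phi> t - b t) x"
      using fejer_mean_diff[OF int_\<phi> int_b] by simp
    also have "cmod \<dots> \<le> \<epsilon> + M"
      using N[OF x] norm_fejer_mean_le[OF Bochner_Integration.integrable_diff[OF int_\<phi> int_b] M \<open>0 < N\<close>]
      by (intro norm_triangle_le add_mono)
    finally show "cmod (\<phi> x - fejer_mean N b x) \<le> M + \<epsilon>"
      by simp
  qed
qed

lemma dist_Linf_C_L_le:
  assumes \<phi>: "\<phi> \<in> CT2" and b: "b \<in> Linf_mm"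
  shows "dist_Linf \<phi> C_L \<le> Linf_norm (\<lambda>z. \<phi> z - b z)"
proof (cases "Linf_norm (\<lambda>z. \<phi> z - b z)")
  case (real M)
  have "AE t in T2meas. ereal (cmod (\<phi> t - b t)) \<le> Linf_norm (\<lambda>z. \<phi> z - b z)"
    unfolding Linf_norm_def by (rule esssup_AE)
  then have M: "AE t in T2meas. cmod (\<phi> t - b t) \<le> M"
    using real by simp
  show ?thesis
  proof (rule ereal_le_epsilon2)
    fix \<epsilon> :: real
    assume "0 < \<epsilon>"
    then obtain c where c: "c \<in> C_L" and close: "\<And>x. x \<in> T2sq \<Longrightarrow> cmod (\<phi> x - c x) \<le> M + \<epsilon>"
      using C_L_approx[OF \<phi> b M] by blast
    have "c \<in> borel_measurable T2meas"
      using c by (intro CT2_measurable) (simp add: C_L_def)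
    then have "Linf_norm (\<lambda>z. \<phi> z - c z) \<le> ereal (M + \<epsilon>)"
      using CT2_measurable[OF \<phi>] close by (intro Linf_norm_le) auto
    then show "dist_Linf \<phi> C_L \<le> Linf_norm (\<lambda>z. \<phi> z - b z) + ereal \<epsilon>"
      unfolding dist_Linf_def using c real by (simp add: INF_lower2)
  qed
next
  case MInf
  then show ?thesis
    using Linf_norm_nonneg[of "\<lambda>z. \<phi> z - b z"] by simp
qed simp

theorem mainTheorem8:
  fixes \<phi> :: "real \<times> real \<Rightarrow> complex"
  assumes "\<phi> \<in> CT2"
  shows "dist_Linf \<phi> Linf_mm = dist_Linf \<phi> C_L"
proof (rule antisym)
  show "dist_Linf \<phi> Linf_mm \<le> dist_Linf \<phi> C_L"
    unfolding dist_Linf_def by (rule INF_superset_mono) (auto simp: C_L_def)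
  show "dist_Linf \<phi> C_L \<le> dist_Linf \<phi> Linf_mm"
    unfolding dist_Linf_def[of \<phi> Linf_mm]
    using dist_Linf_C_L_le[OF assms] by (rule INF_greatest)
qed

end
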